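(* For any efficient domination graph $G$, $\gamma_{qtR}(G)\le 3\rho(G)$.
   Context: All graphs are finite, simple and undirected. A set $B\subseteq V(G)$ is a packing if $N[u]\cap N[v]=\emptyset$ for all distinct $u,v\in B$; the packing number $\rho(G)$ is the maximum size of a packing. $G$ is an efficient domination graph if $\rho(G)=\gamma(G)$, where $\gamma(G)$ is the domination number. For $f:V(G)\to\{0,1,2\}$ write $V_i=\{v:f(v)=i\}$; weight $\omega(f)=|V_1|+2|V_2|$. A quasi-total Roman dominating function (QTRDF) is an $f$ such that every vertex labeled $0$ is adjacent to a vertex labeled $2$, and every vertex isolated in the subgraph induced by $V_1\cup V_2$ has label $1$; $\gamma_{qtR}(G)$ is the minimum weight of a QTRDF. *)

theory Defs
  imports Main
begin

definition simple_graph :: "'a set \<Rightarrow> ('a \<Rightarrow> 'a \<Rightarrow> bool) \<Rightarrow> bool" where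
  "simple_graph V E \<longleftrightarrow> finite V \<and> (\<forall>u v. E u v \<longrightarrow> u \<in> V \<and> v \<in> V)
     \<and> (\<forall>u v. E u v \<longrightarrow> E v u) \<and> (\<forall>v. \<not> E v v)"

definition open_nbhd :: "'a set \<Rightarrow> ('a \<Rightarrow> 'a \<Rightarrow> bool) \<Rightarrow> 'a \<Rightarrow> 'a set" where
  "open_nbhd V E v = {u \<in> V. E v u}"

definition closed_nbhd :: "'a set \<Rightarrow> ('a \<Rightarrow> 'a \<Rightarrow> bool) \<Rightarrow> 'a \<Rightarrow> 'a set" where
  "closed_nbhd V E v = insert v (open_nbhd V E v)"

definition packing :: "'a set \<Rightarrow> ('a \<Rightarrow> 'a \<Rightarrow> bool) \<Rightarrow> 'a set \<Rightarrow> bool" where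
  "packing V E B \<longleftrightarrow> B \<subseteq> V \<and>
     (\<forall>u\<in>B. \<forall>v\<in>B. u \<noteq> v \<longrightarrow> closed_nbhd V E u \<inter> closed_nbhd V E v = {})"

definition packing_number :: "'a set \<Rightarrow> ('a \<Rightarrow> 'a \<Rightarrow> bool) \<Rightarrow> nat" where
  "packing_number V E = Max {card B | B. packing V E B}"

definition dominating_set :: "'a set \<Rightarrow> ('a \<Rightarrow> 'a \<Rightarrow> bool) \<Rightarrow> 'a set \<Rightarrow> bool" where
  "dominating_set V E D \<longleftrightarrow> D \<subseteq> V \<and> (\<forall>v\<in>V. v \<in> D \<or> (\<exists>u\<in>D. E v u))"

definition domination_number :: "'a set \<Rightarrow> ('a \<Rightarrow> 'a \<Rightarrow> bool) \<Rightarrow> nat" where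
  "domination_number V E = Min {card D | D. dominating_set V E D}"

definition efficient_domination_graph :: "'a set \<Rightarrow> ('a \<Rightarrow> 'a \<Rightarrow> bool) \<Rightarrow> bool" where
  "efficient_domination_graph V E \<longleftrightarrow> packing_number V E = domination_number V E"

text \<open>Labelling functions f : V -> {0,1,2}; values outside V are irrelevant.
The weight is |V_1| + 2|V_2| = sum of labels over V.\<close>

definition weight :: "'a set \<Rightarrow> ('a \<Rightarrow> nat) \<Rightarrow> nat" where
  "weight V f = (\<Sum>v\<in>V. f v)"

definition qtrdf :: "'a set \<Rightarrow> ('a \<Rightarrow> 'a \<Rightarrow> bool) \<Rightarrow> ('a \<Rightarrow> nat) \<Rightarrow> bool" where
  "qtrdf V E f \<longleftrightarrow> (\<forall>v\<in>V. f v \<le> 2)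
     \<and> (\<forall>v\<in>V. f v = 0 \<longrightarrow> (\<exists>u\<in>V. E v u \<and> f u = 2))
     \<and> (\<forall>v\<in>V. f v \<ge> 1 \<and> \<not> (\<exists>u\<in>V. E v u \<and> f u \<ge> 1) \<longrightarrow> f v = 1)"

definition qt_roman_domination_number :: "'a set \<Rightarrow> ('a \<Rightarrow> 'a \<Rightarrow> bool) \<Rightarrow> nat" where
  "qt_roman_domination_number V E = Min {weight V f | f. qtrdf V E f}"

end

theory Submission
  imports Defs
begin

text \<open>Take a minimum dominating set D. Label 2 every vertex of D that has a neighbour,
label 1 the isolated vertices of D and one chosen neighbour of each non-isolated vertex
of D, and label 0 everything else. This is a quasi-total Roman dominating function of
weight at most 2|D| + |D| = 3 \<gamma>(G), and \<gamma>(G) = \<rho>(G) for an efficient domination graph.\<close>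

definition partner :: "('a \<Rightarrow> 'a \<Rightarrow> bool) \<Rightarrow> 'a \<Rightarrow> 'a" where
  "partner E s = (SOME u. E s u)"

definition dominating_label :: "('a \<Rightarrow> 'a \<Rightarrow> bool) \<Rightarrow> 'a set \<Rightarrow> 'a \<Rightarrow> nat" where
  "dominating_label E D x =
     (if x \<in> D \<and> (\<exists>u. E x u) then 2
      else if x \<in> D \<or> x \<in> partner E ` {s \<in> D. \<exists>u. E s u} then 1 else 0)"

lemma partner_adjacent: "\<exists>u. E s u \<Longrightarrow> E s (partner E s)"
  unfolding partner_def by (rule someI_ex)

lemma dominating_set_of_card_domination_number:
  assumes "finite V"
  obtains D where "dominating_set V E D" "card D = domination_number V E"
proof -
  let ?DS = "{card D | D. dominating_set V E D}"
  have "?DS \<subseteq> {..card V}"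
    using assms by (auto simp: dominating_set_def intro: card_mono)
  hence "finite ?DS" using finite_subset by blast
  moreover have "dominating_set V E V" unfolding dominating_set_def by auto
  hence "?DS \<noteq> {}" by blast
  ultimately have "domination_number V E \<in> ?DS"
    unfolding domination_number_def by (rule Min_in)
  then show ?thesis using that by auto
qed

lemma qt_roman_domination_number_le_weight:
  assumes "finite V" "qtrdf V E f"
  shows "qt_roman_domination_number V E \<le> weight V f"
proof -
  let ?Q = "{weight V h | h. qtrdf V E h}"
  have "?Q \<subseteq> {..2 * card V}"
  proof
    fix w assume "w \<in> ?Q"
    then obtain h where h: "w = weight V h" "qtrdf V E h" by auto
    have "weight V h \<le> (\<Sum>x\<in>V. 2)" unfolding weight_def
      using h(2) by (intro sum_mono) (auto simp: qtrdf_def)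
    thus "w \<in> {..2 * card V}" using h by simp
  qed
  hence "finite ?Q" using finite_subset by blast
  moreover have "weight V f \<in> ?Q" using assms(2) by blast
  ultimately show ?thesis
    unfolding qt_roman_domination_number_def by (rule Min_le)
qed

lemma qtrdf_dominating_label:
  assumes graph: "simple_graph V E" and D: "dominating_set V E D"
  shows "qtrdf V E (dominating_label E D)"
  unfolding qtrdf_def
proof (intro conjI ballI impI)
  let ?f = "dominating_label E D"
  have E_in_V: "\<And>u v. E u v \<Longrightarrow> u \<in> V \<and> v \<in> V" and E_sym: "\<And>u v. E u v \<Longrightarrow> E v u"
    using graph unfolding simple_graph_def by auto
  fix v assume "v \<in> V"
  show "?f v \<le> 2" unfolding dominating_label_def by auto
  show "\<exists>u\<in>V. E v u \<and> ?f u = 2" if "?f v = 0"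
  proof -
    have "v \<notin> D" using that unfolding dominating_label_def by (auto split: if_splits)
    then obtain u where "u \<in> D" "E v u" using D \<open>v \<in> V\<close> unfolding dominating_set_def by blast
    moreover have "?f u = 2" using \<open>u \<in> D\<close> \<open>E v u\<close> E_sym unfolding dominating_label_def by auto
    ultimately show ?thesis using E_in_V by blast
  qed
  show "?f v = 1" if "1 \<le> ?f v \<and> \<not> (\<exists>u\<in>V. E v u \<and> 1 \<le> ?f u)"
  proof (rule ccontr)
    assume "?f v \<noteq> 1"
    hence "v \<in> D" "\<exists>u. E v u" using that unfolding dominating_label_def by (auto split: if_splits)
    hence "E v (partner E v)" "1 \<le> ?f (partner E v)"
      using partner_adjacent[of E v] unfolding dominating_label_def by auto
    then show False using that E_in_V by blast
  qed
qed

lemma weight_dominating_label_le: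
  assumes "finite V" "D \<subseteq> V"
  shows "weight V (dominating_label E D) \<le> 3 * card D"
proof -
  let ?N = "partner E ` {s \<in> D. \<exists>u. E s u}"
  have "finite D" using assms finite_subset by blast
  have "weight V (dominating_label E D) \<le> (\<Sum>x\<in>V. 2 * of_bool (x \<in> D) + of_bool (x \<in> ?N))"
    unfolding weight_def by (rule sum_mono) (auto simp: dominating_label_def)
  also have "\<dots> = 2 * card (V \<inter> D) + card (V \<inter> ?N)"
    using assms by (simp add: sum.distrib flip: sum_distrib_left)
  also have "card (V \<inter> ?N) \<le> card ?N"
    using \<open>finite D\<close> by (intro card_mono) auto
  also have "card ?N \<le> card {s \<in> D. \<exists>u. E s u}"
    by (rule card_image_le) (use \<open>finite D\<close> in auto)
  also have "\<dots> \<le> card D"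
    using \<open>finite D\<close> by (intro card_mono) auto
  finally show ?thesis
    using assms(2) by (simp add: Int_absorb1)
qed

theorem qt_roman_domination_number_le_domination_number:
  assumes "simple_graph V E"
  shows "qt_roman_domination_number V E \<le> 3 * domination_number V E"
proof -
  have "finite V" using assms unfolding simple_graph_def by blast
  then obtain D where D: "dominating_set V E D" "card D = domination_number V E"
    by (rule dominating_set_of_card_domination_number)
  have "qt_roman_domination_number V E \<le> weight V (dominating_label E D)"
    using \<open>finite V\<close> qtrdf_dominating_label[OF assms D(1)]
    by (rule qt_roman_domination_number_le_weight)
  also have "\<dots> \<le> 3 * card D"
    using \<open>finite V\<close> D(1) by (intro weight_dominating_label_le) (auto simp: dominating_set_def)
  finally show ?thesis using D(2) by simp
qed

theorem mainTheorem9: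
  fixes V :: "'a set" and E :: "'a \<Rightarrow> 'a \<Rightarrow> bool"
  assumes "simple_graph V E"
    and "efficient_domination_graph V E"
  shows "qt_roman_domination_number V E \<le> 3 * packing_number V E"
  using qt_roman_domination_number_le_domination_number[OF assms(1)] assms(2)
  unfolding efficient_domination_graph_def by simp

end
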